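(* Let $m\ge0$ be an integer. Let $\varphi\in C^\infty(T\mathbb{S}^{n-1}\setminus\mathbb{S}^{n-1}_0)$ satisfy $$E_{m+1}E_m\cdots E_1\varphi=0$$ for all indices $1\le i_1,j_1,\dots,i_{m+1},j_{m+1}\le n$, where $$E_k=x_{i_k}\Xi_{j_k}-x_{j_k}\Xi_{i_k}+(m-k+1)\big(x_{i_k}\xi_{j_k}-x_{j_k}\xi_{i_k}\big)\quad(k=1,\dots,m+1)$$ (so $E_1$ is applied first and $E_{m+1}$ last). Define $\psi\in C^\infty(V_n)$ by $$\psi(x,\xi)=|\xi|^m\varphi\big(x,\xi/|\xi|\big).$$ Then, for all indices $1\le i_1,j_1,\dots,i_{m+1},j_{m+1}\le n$, $$\Big(x_{i_1}\frac{\partial}{\partial\xi^{j_1}}-x_{j_1}\frac{\partial}{\partial\xi^{i_1}}\Big)\cdots\Big(x_{i_{m+1}}\frac{\partial}{\partial\xi^{j_{m+1}}}-x_{j_{m+1}}\frac{\partial}{\partial\xi^{i_{m+1}}}\Big)\psi=0$$ on $V_n$.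
   Context: $T\mathbb{S}^{n-1}=\{(x,\xi):|\xi|=1,\ \langle x,\xi\rangle=0\}$ and $\mathbb{S}^{n-1}_0=\{(0,\xi):\xi\in\mathbb{S}^{n-1}\}\subset T\mathbb{S}^{n-1}$. Let $$V_n=\{(x,\xi)\in\mathbb{R}^n\times\mathbb{R}^n: x\ne0,\ \xi\ne0,\ \langle x,\xi\rangle=0\},$$ a smooth hypersurface of $(\mathbb{R}^n\setminus\{0\})^2$. The vector fields $x_i\partial/\partial\xi^j-x_j\partial/\partial\xi^i$ are tangent to $V_n$, hence act on $C^\infty(V_n)$. On $\mathbb{R}^n\times\mathbb{R}^n$ define (summation over $p$) $$\tilde\Xi_i=\partial/\partial\xi^i-x_i\xi^p\,\partial/\partial x^p-\xi_i\xi^p\,\partial/\partial\xi^p.$$ This field is tangent to $T\mathbb{S}^{n-1}$; $\Xi_i$ denotes its restriction to $T\mathbb{S}^{n-1}\setminus\mathbb{S}^{n-1}_0$. Here $x_i=x^i$ and $\xi_i=\xi^i$ act by multiplication. *)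

theory Defs
  imports "HOL-Analysis.Analysis"
begin

type_synonym 'n pt = "(real^'n) \<times> (real^'n)"

fun dderiv :: "('a::real_normed_vector \<Rightarrow> real) \<Rightarrow> 'a list \<Rightarrow> 'a \<Rightarrow> real" where
  "dderiv f [] = f"
| "dderiv f (v # vs) = (\<lambda>p. frechet_derivative (dderiv f vs) (at p) v)"

definition smooth_on_open :: "'a::real_normed_vector set \<Rightarrow> ('a \<Rightarrow> real) \<Rightarrow> bool" where
  "smooth_on_open U f \<longleftrightarrow> open U \<and> (\<forall>vs. \<forall>p\<in>U. dderiv f vs differentiable (at p))"

definition smooth_on_sub :: "'a::real_normed_vector set \<Rightarrow> ('a \<Rightarrow> real) \<Rightarrow> bool" where
  "smooth_on_sub S f \<longleftrightarrow>
     (\<forall>p\<in>S. \<exists>U g. open U \<and> p \<in> U \<and> smooth_on_open U g \<and> (\<forall>q\<in>S \<inter> U. f q = g q))"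

definition vf_act :: "'a::real_normed_vector set \<Rightarrow> ('a \<Rightarrow> 'a) \<Rightarrow> ('a \<Rightarrow> real) \<Rightarrow> 'a \<Rightarrow> real" where
  "vf_act S X f = (\<lambda>p. frechet_derivative f (at p within S) (X p))"

definition TS :: "'n::finite pt set" where
  "TS = {(x, \<xi>). norm \<xi> = 1 \<and> inner x \<xi> = 0}"

definition S0 :: "'n::finite pt set" where
  "S0 = {(x, \<xi>). x = 0 \<and> norm \<xi> = 1}"

definition Vn :: "'n::finite pt set" where
  "Vn = {(x, \<xi>). x \<noteq> 0 \<and> \<xi> \<noteq> 0 \<and> inner x \<xi> = 0}"

text \<open>The vector field Xi-tilde_i = d/dxi^i - x_i xi^p d/dx^p - xi_i xi^p d/dxi^p.\<close>
definition Xi :: "'n::finite \<Rightarrow> 'n pt \<Rightarrow> 'n pt" where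
  "Xi i = (\<lambda>(x, \<xi>). (- (x $ i) *\<^sub>R \<xi>, axis i 1 - (\<xi> $ i) *\<^sub>R \<xi>))"

definition Lf :: "'n::finite \<Rightarrow> 'n \<Rightarrow> 'n pt \<Rightarrow> 'n pt" where
  "Lf i j = (\<lambda>(x, \<xi>). (0, (x $ i) *\<^sub>R axis j 1 - (x $ j) *\<^sub>R axis i 1))"

definition Eop :: "real \<Rightarrow> 'n::finite \<Rightarrow> 'n \<Rightarrow> ('n pt \<Rightarrow> real) \<Rightarrow> 'n pt \<Rightarrow> real" where
  "Eop c i j f = (\<lambda>p. fst p $ i * vf_act (TS - S0) (Xi j) f p
                      - fst p $ j * vf_act (TS - S0) (Xi i) f p
                      + c * (fst p $ i * snd p $ j - fst p $ j * snd p $ i) * f p)"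

end

theory Submission
  imports Defs
begin

text \<open>\<open>\<psi>\<close> is the homogeneous extension of degree \<open>m\<close> of \<open>\<phi>\<close> from \<open>TS - S0\<close> to \<open>Vn\<close>,
  via \<open>(x, \<xi>) \<mapsto> (x, \<xi> / |\<xi>|)\<close>. Differentiating the degree \<open>c\<close> extension of \<open>g\<close> along
  \<open>x\<^sub>i \<partial>/\<partial>\<xi>\<^sup>j - x\<^sub>j \<partial>/\<partial>\<xi>\<^sup>i\<close> gives the degree \<open>c - 1\<close> extension of
  \<open>x\<^sub>i \<Xi>\<^sub>j g - x\<^sub>j \<Xi>\<^sub>i g + c (x\<^sub>i \<xi>\<^sub>j - x\<^sub>j \<xi>\<^sub>i) g\<close>: the radial factor contributes the
  zeroth-order term and the normalisation map carries the field to \<open>(x\<^sub>i \<Xi>\<^sub>j - x\<^sub>j \<Xi>\<^sub>i) / |\<xi>|\<close>.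
  Iterating \<open>m + 1\<close> times turns \<open>\<psi>\<close> into the degree \<open>-1\<close> extension of \<open>E\<^sub>m\<^sub>+\<^sub>1 \<cdots> E\<^sub>1 \<phi> = 0\<close>.
  Since derivatives are taken within the submanifolds, one also needs that they are determined
  along these fields, each being the velocity of a curve in the submanifold, and that the
  operators \<open>E\<close> preserve smoothness.\<close>

lemma dderiv_snoc: "dderiv f (vs @ [v]) = dderiv (dderiv f [v]) vs"
  by (induction vs) auto

lemma frechet_derivative_cong_open:
  assumes "open U" "q \<in> U" "\<And>y. y \<in> U \<Longrightarrow> f y = g y"
  shows "frechet_derivative f (at q) = frechet_derivative g (at q)"
proof -
  have "(f has_derivative D) (at q) \<longleftrightarrow> (g has_derivative D) (at q)" for D
    using assms has_derivative_transform_within_open[of _ _ q UNIV U] by metis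
  then show ?thesis unfolding frechet_derivative_def by simp
qed

lemma dderiv_cong_open:
  assumes "open U" "\<And>y. y \<in> U \<Longrightarrow> f y = g y" "q \<in> U"
  shows "dderiv f vs q = dderiv g vs q"
  using assms(3)
proof (induction vs arbitrary: q)
  case (Cons v vs)
  then have "frechet_derivative (dderiv f vs) (at q) = frechet_derivative (dderiv g vs) (at q)"
    using frechet_derivative_cong_open[OF assms(1)] by blast
  then show ?case by simp
qed (use assms in simp)

lemma differentiable_cong_open:
  assumes "open U" "p \<in> U" "\<And>y. y \<in> U \<Longrightarrow> f y = g y" "f differentiable (at p)"
  shows "g differentiable (at p)"
  using assms has_derivative_transform_within_open[of f _ p UNIV U g]
  unfolding differentiable_def by metis

lemma smooth_on_open_imp_open: "smooth_on_open U f \<Longrightarrow> open U"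
  unfolding smooth_on_open_def by blast

lemma smooth_on_open_differentiable: "smooth_on_open U f \<Longrightarrow> p \<in> U \<Longrightarrow> f differentiable (at p)"
  unfolding smooth_on_open_def by (metis dderiv.simps(1))

lemma smooth_on_open_dderiv: "smooth_on_open U f \<Longrightarrow> smooth_on_open U (dderiv f [v])"
  unfolding smooth_on_open_def by (metis dderiv_snoc)

lemma smooth_on_open_cong:
  assumes f: "smooth_on_open U f" and eq: "\<And>q. q \<in> U \<Longrightarrow> f q = g q"
  shows "smooth_on_open U g"
  unfolding smooth_on_open_def
proof (intro conjI allI ballI)
  show U: "open U" using smooth_on_open_imp_open[OF f] .
  fix vs p assume p: "p \<in> U"
  have "dderiv f vs differentiable (at p)" using f p smooth_on_open_def by blast
  moreover have "\<And>y. y \<in> U \<Longrightarrow> dderiv f vs y = dderiv g vs y"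
    using dderiv_cong_open[OF U eq] .
  ultimately show "dderiv g vs differentiable (at p)"
    using differentiable_cong_open[OF U p] by blast
qed

lemma smooth_on_open_coinduct:
  assumes U: "open U"
    and diff: "\<And>f p. P f \<Longrightarrow> p \<in> U \<Longrightarrow> f differentiable (at p)"
    and step: "\<And>f v. P f \<Longrightarrow> \<exists>g. P g \<and> (\<forall>q\<in>U. dderiv f [v] q = g q)"
    and "P f"
  shows "smooth_on_open U f"
proof -
  have "\<forall>f. P f \<longrightarrow> (\<forall>p\<in>U. dderiv f vs differentiable (at p))" for vs
  proof (induction vs rule: rev_induct)
    case (snoc v vs)
    show ?case
    proof (intro allI impI ballI)
      fix f p assume "P f" "p \<in> U"
      obtain g where g: "P g" "\<forall>q\<in>U. dderiv f [v] q = g q" using step[OF \<open>P f\<close>] by blast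
      have "dderiv g vs differentiable (at p)" using snoc g(1) \<open>p \<in> U\<close> by blast
      moreover have "dderiv g vs q = dderiv (dderiv f [v]) vs q" if "q \<in> U" for q
        using dderiv_cong_open[OF U _ that] g(2) by metis
      ultimately show "dderiv f (vs @ [v]) differentiable (at p)"
        unfolding dderiv_snoc using differentiable_cong_open[OF U \<open>p \<in> U\<close>] by blast
    qed
  qed (use diff in simp)
  then show ?thesis unfolding smooth_on_open_def using U \<open>P f\<close> by blast
qed

lemma dderiv_const: "dderiv (\<lambda>_. c) vs = (\<lambda>_. if vs = [] then c else 0)"
  by (induction vs) auto

lemma smooth_on_open_const: "open U \<Longrightarrow> smooth_on_open U (\<lambda>_. c)"
  unfolding smooth_on_open_def dderiv_const by simp

lemma smooth_on_open_bounded_linear: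
  assumes "open U" "bounded_linear f"
  shows "smooth_on_open U f"
  unfolding smooth_on_open_def
proof (intro conjI assms allI ballI)
  fix vs p
  show "dderiv f vs differentiable (at p)"
  proof (cases vs rule: rev_exhaust)
    case Nil
    then show ?thesis using assms(2) by (simp add: bounded_linear_imp_differentiable)
  next
    case (snoc ws v)
    have "dderiv f [v] = (\<lambda>_. f v)"
      using frechet_derivative_at[OF bounded_linear_imp_has_derivative[OF assms(2)]] by auto
    then show ?thesis unfolding snoc dderiv_snoc by (simp only: dderiv_const) simp
  qed
qed

definition sum_of_products :: "(('a \<Rightarrow> real) \<times> ('a \<Rightarrow> real)) list \<Rightarrow> 'a \<Rightarrow> real" where
  "sum_of_products L q = (\<Sum>(f, g)\<leftarrow>L. f q * g q)"

lemma has_derivative_sum_of_products: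
  assumes "\<forall>(f, g)\<in>set L. smooth_on_open U f \<and> smooth_on_open U g" "q \<in> U"
  shows "(sum_of_products L has_derivative (\<lambda>y. \<Sum>(f, g)\<leftarrow>L.
            f q * frechet_derivative g (at q) y + frechet_derivative f (at q) y * g q)) (at q)"
  using assms(1)
proof (induction L)
  case Nil
  then show ?case by (simp add: sum_of_products_def)
next
  case (Cons fg L)
  obtain f g where fg: "fg = (f, g)" by force
  have "smooth_on_open U f" "smooth_on_open U g" using Cons.prems fg by auto
  then have "(f has_derivative frechet_derivative f (at q)) (at q)"
    "(g has_derivative frechet_derivative g (at q)) (at q)"
    using smooth_on_open_differentiable[OF _ assms(2)] frechet_derivative_works by blast+
  from has_derivative_add[OF has_derivative_mult[OF this] Cons.IH] Cons.prems
  show ?case by (simp add: fg sum_of_products_def)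
qed

text \<open>By the product rule, directional derivatives of finite sums of products of smooth
  functions are again of this form, which makes them a coinductive invariant.\<close>

lemma smooth_on_open_sum_of_products:
  assumes U: "open U" and L: "\<forall>(f, g)\<in>set L. smooth_on_open U f \<and> smooth_on_open U g"
    and h: "\<And>q. q \<in> U \<Longrightarrow> h q = sum_of_products L q"
  shows "smooth_on_open U h"
proof -
  define P where "P h \<longleftrightarrow> (\<exists>L. (\<forall>(f, g)\<in>set L. smooth_on_open U f \<and> smooth_on_open U g)
      \<and> (\<forall>q\<in>U. h q = sum_of_products L q))" for h
  show ?thesis
  proof (rule smooth_on_open_coinduct[of U P])
    show "P h" unfolding P_def using L h by blast
  next
    fix h p assume "P h" "p \<in> U"
    then obtain L where L: "\<forall>(f, g)\<in>set L. smooth_on_open U f \<and> smooth_on_open U g"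
      "\<forall>q\<in>U. h q = sum_of_products L q" unfolding P_def by blast
    have "sum_of_products L differentiable (at p)"
      using has_derivative_sum_of_products[OF L(1) \<open>p \<in> U\<close>] by (rule differentiableI)
    then show "h differentiable (at p)"
      using differentiable_cong_open[OF U \<open>p \<in> U\<close>, of "sum_of_products L" h] L(2) by simp
  next
    fix h v assume "P h"
    then obtain L where L: "\<forall>(f, g)\<in>set L. smooth_on_open U f \<and> smooth_on_open U g"
      "\<forall>q\<in>U. h q = sum_of_products L q" unfolding P_def by blast
    define L' where "L' = map (\<lambda>(f, g). (f, dderiv g [v])) L @ map (\<lambda>(f, g). (dderiv f [v], g)) L"
    have "\<forall>(f, g)\<in>set L'. smooth_on_open U f \<and> smooth_on_open U g"
      using L(1) by (auto simp: L'_def intro: smooth_on_open_dderiv[of U _ v, simplified])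
    moreover have "dderiv h [v] q = sum_of_products L' q" if q: "q \<in> U" for q
    proof -
      have "dderiv h [v] q = frechet_derivative (sum_of_products L) (at q) v"
        using frechet_derivative_cong_open[OF U q, of h "sum_of_products L"] L(2) by simp
      also have "\<dots> = (\<Sum>(f, g)\<leftarrow>L. f q * frechet_derivative g (at q) v
              + frechet_derivative f (at q) v * g q)"
        by (simp only: frechet_derivative_at[OF has_derivative_sum_of_products[OF L(1) q], symmetric])
      also have "\<dots> = sum_of_products L' q"
        unfolding L'_def sum_of_products_def by (induction L) auto
      finally show ?thesis .
    qed
    ultimately show "\<exists>g. P g \<and> (\<forall>q\<in>U. dderiv h [v] q = g q)"
      unfolding P_def by blast
  qed (rule U)
qed

lemma smooth_on_open_mult:
  "smooth_on_open U f \<Longrightarrow> smooth_on_open U g \<Longrightarrow> smooth_on_open U (\<lambda>q. f q * g q)"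
  by (rule smooth_on_open_sum_of_products[of U "[(f, g)]"])
    (auto simp: sum_of_products_def dest: smooth_on_open_imp_open)

lemma smooth_on_open_add:
  "smooth_on_open U f \<Longrightarrow> smooth_on_open U g \<Longrightarrow> smooth_on_open U (\<lambda>q. f q + g q)"
  by (rule smooth_on_open_sum_of_products[of U "[(f, \<lambda>_. 1), (g, \<lambda>_. 1)]"])
    (auto simp: sum_of_products_def intro: smooth_on_open_const dest: smooth_on_open_imp_open)

lemma smooth_on_open_cmult: "smooth_on_open U f \<Longrightarrow> smooth_on_open U (\<lambda>q. c * f q)"
  by (rule smooth_on_open_mult[OF smooth_on_open_const[OF smooth_on_open_imp_open]])

lemma smooth_on_open_diff:
  "smooth_on_open U f \<Longrightarrow> smooth_on_open U g \<Longrightarrow> smooth_on_open U (\<lambda>q. f q - g q)"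
  using smooth_on_open_add[OF _ smooth_on_open_cmult[of U g "-1"]] by simp

lemma smooth_on_open_sum:
  "finite A \<Longrightarrow> open U \<Longrightarrow> (\<And>a. a \<in> A \<Longrightarrow> smooth_on_open U (F a)) \<Longrightarrow>
     smooth_on_open U (\<lambda>q. \<Sum>a\<in>A. F a q)"
  by (induction A rule: finite_induct) (auto intro: smooth_on_open_const smooth_on_open_add)

lemma smooth_on_open_frechet_derivative:
  fixes G :: "'a::euclidean_space \<Rightarrow> real"
  assumes G: "smooth_on_open U G"
    and X: "\<And>b. b \<in> Basis \<Longrightarrow> smooth_on_open U (\<lambda>q. inner (X q) b)"
  shows "smooth_on_open U (\<lambda>q. frechet_derivative G (at q) (X q))"
proof (rule smooth_on_open_cong)
  show "smooth_on_open U (\<lambda>q. \<Sum>b\<in>Basis. inner (X q) b * dderiv G [b] q)"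
    by (intro smooth_on_open_sum smooth_on_open_mult X smooth_on_open_dderiv[OF G]
        smooth_on_open_imp_open[OF G] finite_Basis)
  fix q assume "q \<in> U"
  then have "linear (frechet_derivative G (at q))"
    using linear_frechet_derivative smooth_on_open_differentiable[OF G] by blast
  then have "frechet_derivative G (at q) (\<Sum>b\<in>Basis. inner (X q) b *\<^sub>R b)
      = (\<Sum>b\<in>Basis. inner (X q) b * frechet_derivative G (at q) b)"
    by (simp add: linear_sum linear_scale)
  then show "(\<Sum>b\<in>Basis. inner (X q) b * dderiv G [b] q) = frechet_derivative G (at q) (X q)"
    by (simp add: euclidean_representation)
qed

lemma smooth_on_open_fst_nth: "open U \<Longrightarrow> smooth_on_open U (\<lambda>q::'n::finite pt. fst q $ j)"
  by (rule smooth_on_open_bounded_linear)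
    (auto intro: bounded_linear_compose[OF bounded_linear_vec_nth] bounded_linear_fst)

lemma smooth_on_open_snd_nth: "open U \<Longrightarrow> smooth_on_open U (\<lambda>q::'n::finite pt. snd q $ j)"
  by (rule smooth_on_open_bounded_linear)
    (auto intro: bounded_linear_compose[OF bounded_linear_vec_nth] bounded_linear_snd)

lemma smooth_on_open_inner_snd: "open U \<Longrightarrow> smooth_on_open U (\<lambda>q::'n::finite pt. inner (snd q) c)"
  by (rule smooth_on_open_bounded_linear)
    (auto intro: bounded_linear_compose[OF bounded_linear_inner_left] bounded_linear_snd)

lemma smooth_on_open_inner_Xi:
  fixes U :: "'n::finite pt set"
  assumes U: "open U"
  shows "smooth_on_open U (\<lambda>q. inner (Xi j q) b)"
proof (rule smooth_on_open_cong)
  show "smooth_on_open U (\<lambda>q. - fst q $ j * inner (snd q) (fst b)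
      + (inner (axis j 1) (snd b) - snd q $ j * inner (snd q) (snd b)))"
    using U by (intro smooth_on_open_add smooth_on_open_mult smooth_on_open_diff
        smooth_on_open_cmult[of U _ "-1", simplified] smooth_on_open_fst_nth
        smooth_on_open_snd_nth smooth_on_open_inner_snd smooth_on_open_const)
  fix q
  show "- fst q $ j * inner (snd q) (fst b)
      + (inner (axis j 1) (snd b) - snd q $ j * inner (snd q) (snd b)) = inner (Xi j q) b"
    by (auto simp: Xi_def inner_prod_def inner_diff_left split: prod.splits)
qed

definition curve_tangent :: "'a::real_normed_vector set \<Rightarrow> 'a \<Rightarrow> 'a \<Rightarrow> bool" where
  "curve_tangent S p v \<longleftrightarrow> (\<exists>\<gamma> T. open T \<and> (0::real) \<in> T \<and> \<gamma> ` T \<subseteq> S \<and> \<gamma> 0 = p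
      \<and> (\<gamma> has_derivative (\<lambda>t. t *\<^sub>R v)) (at 0))"

lemma has_derivative_within_unique_curve_tangent:
  fixes f :: "'a::real_normed_vector \<Rightarrow> 'b::real_normed_vector"
  assumes D1: "(f has_derivative D1) (at p within S)" and D2: "(f has_derivative D2) (at p within S)"
    and "curve_tangent S p v"
  shows "D1 v = D2 v"
proof -
  obtain \<gamma> and T :: "real set" where T: "open T" "0 \<in> T" "\<gamma> ` T \<subseteq> S" "\<gamma> 0 = p"
    and \<gamma>: "(\<gamma> has_derivative (\<lambda>t. t *\<^sub>R v)) (at 0)"
    using \<open>curve_tangent S p v\<close> unfolding curve_tangent_def by blast
  have \<gamma>': "(\<gamma> has_derivative (\<lambda>t. t *\<^sub>R v)) (at 0 within T)"
    using \<gamma> has_derivative_at_withinI by blast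
  have "((\<lambda>t. f (\<gamma> t)) has_derivative (\<lambda>t. D (t *\<^sub>R v))) (at 0)"
    if "(f has_derivative D) (at p within S)" for D
  proof -
    have "(f has_derivative D) (at (\<gamma> 0) within \<gamma> ` T)"
      using has_derivative_subset[OF that T(3)] T(4) by simp
    from has_derivative_in_compose[OF \<gamma>' this] show ?thesis
      using at_within_open[OF T(2,1)] by simp
  qed
  from has_derivative_unique[OF this[OF D1] this[OF D2]]
  show ?thesis by (metis scaleR_one)
qed

lemma vf_act_eq_derivative:
  assumes "(f has_derivative D) (at p within S)" "curve_tangent S p (X p)"
  shows "vf_act S X f p = D (X p)"
proof -
  have "(f has_derivative frechet_derivative f (at p within S)) (at p within S)"
    using assms(1) frechet_derivative_works differentiableI by blast
  then show ?thesis
    unfolding vf_act_def using has_derivative_within_unique_curve_tangent assms by blast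
qed

lemma vf_act_cong:
  assumes "p \<in> S" "\<And>q. q \<in> S \<Longrightarrow> f q = g q"
  shows "vf_act S X f p = vf_act S X g p"
proof -
  have "(f has_derivative D) (at p within S) \<longleftrightarrow> (g has_derivative D) (at p within S)" for D
    using has_derivative_transform[OF assms(1)] assms(2) by metis
  then show ?thesis unfolding vf_act_def frechet_derivative_def by simp
qed

lemma curve_tangent_Vn_Lf:
  fixes p :: "'n::finite pt"
  assumes "p \<in> Vn"
  shows "curve_tangent Vn p (Lf i j p)"
proof -
  obtain x \<xi> where p: "p = (x, \<xi>)" by force
  have x: "x \<noteq> 0" "\<xi> \<noteq> 0" "inner x \<xi> = 0" using assms p by (auto simp: Vn_def)
  define v where "v = (x $ i) *\<^sub>R axis j (1::real) - (x $ j) *\<^sub>R axis i 1"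
  have "inner x v = 0" by (simp add: v_def inner_diff_right inner_axis)
  show ?thesis unfolding curve_tangent_def
  proof (intro exI conjI)
    show "open {t::real. \<xi> + t *\<^sub>R v \<noteq> 0}" by (intro open_Collect_neq continuous_intros)
    show "(\<lambda>t. (x, \<xi> + t *\<^sub>R v)) ` {t. \<xi> + t *\<^sub>R v \<noteq> 0} \<subseteq> Vn"
      using x \<open>inner x v = 0\<close> by (auto simp: Vn_def inner_add_right)
    show "((\<lambda>t. (x, \<xi> + t *\<^sub>R v)) has_derivative (\<lambda>t. t *\<^sub>R Lf i j p)) (at 0)"
      by (auto simp: Lf_def p v_def intro!: derivative_eq_intros)
  qed (use x p in auto)
qed

text \<open>\<open>w\<close> is a rational parametrisation of the great circle through \<open>\<omega>\<close> with initial velocity \<open>b\<close>,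
  and \<open>y t\<close> is the projection of \<open>x + t a\<close> onto \<open>w t\<close>'s orthogonal complement; the two
  tangency conditions say exactly that \<open>y\<close> has initial velocity \<open>a\<close>.\<close>

lemma curve_tangent_TS_minus_S0:
  assumes q: "(x, \<omega>) \<in> TS - S0" and b: "inner \<omega> b = 0" and ab: "inner a \<omega> + inner x b = 0"
  shows "curve_tangent (TS - S0) (x, \<omega>) (a, b)"
proof -
  have x: "x \<noteq> 0" "inner \<omega> \<omega> = 1" "inner x \<omega> = 0"
    using q by (auto simp: TS_def S0_def dot_square_norm)
  define \<beta> where "\<beta> = inner b b / 4"
  have pos: "1 + t^2 * \<beta> > 0" for t by (simp add: \<beta>_def add_pos_nonneg)
  define w where "w t = (1 / (1 + t^2 * \<beta>)) *\<^sub>R ((1 - t^2 * \<beta>) *\<^sub>R \<omega> + t *\<^sub>R b)" for t :: real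
  define y where "y t = (x + t *\<^sub>R a) - inner (x + t *\<^sub>R a) (w t) *\<^sub>R w t" for t :: real
  have ww: "inner (w t) (w t) = 1" for t
  proof -
    have "inner ((1 - t^2 * \<beta>) *\<^sub>R \<omega> + t *\<^sub>R b) ((1 - t^2 * \<beta>) *\<^sub>R \<omega> + t *\<^sub>R b)
        = (1 + t^2 * \<beta>)^2"
      using x b by (simp add: \<beta>_def inner_add_left inner_add_right inner_commute
          power2_eq_square algebra_simps)
    then show ?thesis using pos[of t] by (simp add: w_def power2_eq_square)
  qed
  have w0: "w 0 = \<omega>" and y0: "y 0 = x" by (simp_all add: w_def y_def x(3))
  show ?thesis unfolding curve_tangent_def
  proof (intro exI conjI)
    have "continuous_on UNIV y"
      unfolding y_def w_def using pos by (intro continuous_intros) (auto simp: less_le)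
    then show "open {t. y t \<noteq> 0}"
      by (intro open_Collect_neq) (auto intro: continuous_intros)
    show "(\<lambda>t. (y t, w t)) ` {t. y t \<noteq> 0} \<subseteq> TS - S0"
      using ww by (auto simp: TS_def S0_def norm_eq_1 y_def inner_diff_left)
    have w': "(w has_derivative (\<lambda>t. t *\<^sub>R b)) (at 0)"
      unfolding w_def by (rule derivative_eq_intros refl | simp)+
    show "((\<lambda>t. (y t, w t)) has_derivative (\<lambda>t. t *\<^sub>R (a, b))) (at 0)"
      unfolding y_def
      apply (rule derivative_eq_intros w' refl | simp)+
      using ab x(3) by (simp add: w0 add.commute flip: scaleR_add_left distrib_left)
  qed (use w0 y0 x in auto)
qed

lemma curve_tangent_TS_minus_S0_Xi:
  assumes "q \<in> TS - S0"
  shows "curve_tangent (TS - S0) q (Xi j q)"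
proof -
  obtain x \<omega> where q: "q = (x, \<omega>)" by force
  have "inner \<omega> \<omega> = 1" "inner x \<omega> = 0"
    using assms q by (auto simp: TS_def S0_def dot_square_norm)
  then show ?thesis
    using curve_tangent_TS_minus_S0[of x \<omega>] assms
    by (auto simp: q Xi_def inner_diff_right inner_diff_left inner_axis inner_axis' inner_commute)
qed

lemma has_derivative_within_smooth_extension:
  assumes U: "open U" "q \<in> U" and G: "smooth_on_open U G"
    and eq: "\<And>y. y \<in> S \<inter> U \<Longrightarrow> g y = G y" and "q \<in> S"
  shows "(g has_derivative frechet_derivative G (at q)) (at q within S)"
proof -
  have "(G has_derivative frechet_derivative G (at q)) (at q within S)"
    using smooth_on_open_differentiable[OF G U(2)] frechet_derivative_works
      has_derivative_at_withinI by blast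
  moreover obtain e where "e > 0" "ball q e \<subseteq> U" using U openE by blast
  ultimately show ?thesis
    using has_derivative_transform_within[of G _ q S e g] eq \<open>q \<in> S\<close>
    by (force simp: dist_commute)
qed

lemma smooth_on_sub_has_derivative:
  assumes "smooth_on_sub S g" "q \<in> S"
  obtains D where "(g has_derivative D) (at q within S)"
  using assms has_derivative_within_smooth_extension unfolding smooth_on_sub_def by blast

lemma smooth_on_sub_Eop:
  assumes g: "smooth_on_sub (TS - S0) (g :: 'n::finite pt \<Rightarrow> real)"
  shows "smooth_on_sub (TS - S0) (Eop c i j g)"
  unfolding smooth_on_sub_def
proof
  fix p :: "'n pt" assume "p \<in> TS - S0"
  then obtain U G where U: "open U" "p \<in> U" and G: "smooth_on_open U G"
    and eq: "\<forall>y\<in>(TS - S0) \<inter> U. g y = G y"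
    using g unfolding smooth_on_sub_def by blast
  define H where "H q = fst q $ i * frechet_derivative G (at q) (Xi j q)
      - fst q $ j * frechet_derivative G (at q) (Xi i q)
      + c * (fst q $ i * snd q $ j - fst q $ j * snd q $ i) * G q" for q
  have "smooth_on_open U H"
    unfolding H_def using U(1)
    by (intro smooth_on_open_add smooth_on_open_diff smooth_on_open_mult smooth_on_open_fst_nth
        smooth_on_open_snd_nth smooth_on_open_const smooth_on_open_frechet_derivative[OF G]
        smooth_on_open_inner_Xi G)
  moreover have "Eop c i j g q = H q" if q: "q \<in> (TS - S0) \<inter> U" for q
  proof -
    have "vf_act (TS - S0) (Xi k) g q = frechet_derivative G (at q) (Xi k q)" for k
      using q eq by (intro vf_act_eq_derivative has_derivative_within_smooth_extension[OF U(1) _ G]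
          curve_tangent_TS_minus_S0_Xi) auto
    then show ?thesis using q eq by (simp add: Eop_def H_def)
  qed
  ultimately show "\<exists>U H. open U \<and> p \<in> U \<and> smooth_on_open U H
      \<and> (\<forall>q\<in>(TS - S0) \<inter> U. Eop c i j g q = H q)"
    using U by blast
qed

lemma smooth_on_sub_foldr_Eop:
  "smooth_on_sub (TS - S0) g \<Longrightarrow>
     smooth_on_sub (TS - S0) (foldr (\<lambda>k h. Eop (C k) (I k) (J k) h) ks g)"
  by (induction ks) (auto intro: smooth_on_sub_Eop)

definition unit_fibre :: "'n::finite pt \<Rightarrow> 'n pt" where
  "unit_fibre p = (fst p, (1 / norm (snd p)) *\<^sub>R snd p)"

definition unit_fibre_deriv :: "'n::finite pt \<Rightarrow> 'n pt \<Rightarrow> 'n pt" where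
  "unit_fibre_deriv p h = (fst h, (1 / norm (snd p)) *\<^sub>R snd h
      - (inner (snd p) (snd h) / norm (snd p) ^ 3) *\<^sub>R snd p)"

definition homog_ext :: "real \<Rightarrow> ('n::finite pt \<Rightarrow> real) \<Rightarrow> 'n pt \<Rightarrow> real" where
  "homog_ext c g p = norm (snd p) powr c * g (unit_fibre p)"

lemma unit_fibre_Vn: "p \<in> Vn \<Longrightarrow> unit_fibre p \<in> TS - S0"
  by (auto simp: Vn_def TS_def S0_def unit_fibre_def)

lemma has_derivative_norm_snd:
  fixes p :: "'a::real_normed_vector \<times> 'b::real_inner"
  assumes "snd p \<noteq> 0"
  shows "((\<lambda>q. norm (snd q)) has_derivative (\<lambda>h. inner (snd p) (snd h) / norm (snd p))) (at p)"
  using has_derivative_compose[OF bounded_linear_imp_has_derivative[OF bounded_linear_snd]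
      has_derivative_norm[OF assms]]
  by (simp add: sgn_div_norm inner_commute field_simps)

lemma has_derivative_unit_fibre:
  assumes "snd p \<noteq> 0"
  shows "(unit_fibre has_derivative unit_fibre_deriv p) (at p)"
  unfolding unit_fibre_def[abs_def]
  apply (rule derivative_eq_intros has_derivative_norm_snd[OF assms] refl | simp add: assms)+
  apply (rule ext)
  apply (simp add: unit_fibre_deriv_def power3_eq_cube field_simps)
  done

lemma unit_fibre_deriv_Lf:
  assumes "snd p \<noteq> 0"
  shows "unit_fibre_deriv p (Lf i j p) = (1 / norm (snd p)) *\<^sub>R
      (fst p $ i *\<^sub>R Xi j (unit_fibre p) - fst p $ j *\<^sub>R Xi i (unit_fibre p))"
proof -
  obtain x \<xi> where p: "p = (x, \<xi>)" by force
  define v where "v = x $ i *\<^sub>R axis j (1::real) - x $ j *\<^sub>R axis i 1"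
  have "inner \<xi> v = x $ i * \<xi> $ j - x $ j * \<xi> $ i"
    by (simp add: v_def inner_diff_right inner_axis)
  then have "unit_fibre_deriv p (Lf i j p) = (0, (1 / norm \<xi>) *\<^sub>R v
      - ((x $ i * \<xi> $ j - x $ j * \<xi> $ i) / norm \<xi> ^ 3) *\<^sub>R \<xi>)"
    by (simp add: unit_fibre_deriv_def Lf_def p v_def)
  then show ?thesis
    using assms by (simp add: p Xi_def unit_fibre_def v_def vec_eq_iff axis_def
        power3_eq_cube field_simps)
qed

lemma has_derivative_homog_ext:
  assumes g: "(g has_derivative Dg) (at (unit_fibre p) within TS - S0)" and p: "p \<in> Vn"
  shows "(homog_ext c g has_derivative (\<lambda>h.
      c * norm (snd p) powr (c - 1) * (inner (snd p) (snd h) / norm (snd p)) * g (unit_fibre p)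
      + norm (snd p) powr c * Dg (unit_fibre_deriv p h))) (at p within Vn)"
proof -
  have \<xi>: "snd p \<noteq> 0" using p by (auto simp: Vn_def)
  have "unit_fibre ` Vn \<subseteq> TS - S0" using unit_fibre_Vn by blast
  from has_derivative_in_compose[OF has_derivative_at_withinI[OF has_derivative_unit_fibre[OF \<xi>]]
      has_derivative_subset[OF g this]]
  have N: "((\<lambda>q. g (unit_fibre q)) has_derivative (\<lambda>h. Dg (unit_fibre_deriv p h))) (at p within Vn)"
    by simp
  have R: "((\<lambda>q. norm (snd q) powr c) has_derivative
      (\<lambda>h. c * norm (snd p) powr (c - 1) * (inner (snd p) (snd h) / norm (snd p)))) (at p within Vn)"
    by (rule has_derivative_eq_rhs[OF has_derivative_powr[OF has_derivative_at_withinI[OF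
          has_derivative_norm_snd[OF \<xi>]] has_derivative_const _ p]])
      (use \<xi> in \<open>auto simp: powr_diff field_simps\<close>)
  from has_derivative_mult[OF R N] show ?thesis
    unfolding homog_ext_def[abs_def] by (simp add: algebra_simps)
qed

lemma vf_act_Lf_homog_ext:
  fixes g :: "'n::finite pt \<Rightarrow> real"
  assumes g: "smooth_on_sub (TS - S0) g" and p: "p \<in> Vn"
  shows "vf_act Vn (Lf i j) (homog_ext c g) p = homog_ext (c - 1) (Eop c i j g) p"
proof -
  obtain x \<xi> where px: "p = (x, \<xi>)" by force
  define r where "r = norm \<xi>"
  have r: "r > 0" and "\<xi> \<noteq> 0" using p by (auto simp: Vn_def px r_def)
  define q where "q = unit_fibre p"
  have q: "q = (x, (1 / r) *\<^sub>R \<xi>)" "q \<in> TS - S0"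
    using unit_fibre_Vn[OF p] by (simp_all add: q_def unit_fibre_def px r_def)
  obtain Dg where Dg: "(g has_derivative Dg) (at q within TS - S0)"
    using smooth_on_sub_has_derivative[OF g q(2)] .
  have "linear Dg" using Dg has_derivative_linear by blast
  have Xi: "vf_act (TS - S0) (Xi k) g q = Dg (Xi k q)" for k
    by (rule vf_act_eq_derivative[where X = "Xi k", OF Dg curve_tangent_TS_minus_S0_Xi[OF q(2)]])
  have "vf_act Vn (Lf i j) (homog_ext c g) p
      = c * r powr (c - 1) * (inner \<xi> (snd (Lf i j p)) / r) * g q
        + r powr c * Dg (unit_fibre_deriv p (Lf i j p))"
    using vf_act_eq_derivative[where X = "Lf i j", OF has_derivative_homog_ext[OF Dg[unfolded q_def] p]
        curve_tangent_Vn_Lf[OF p]]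
    by (simp add: q_def px r_def)
  also have "\<dots> = c * r powr (c - 1) * ((x $ i * \<xi> $ j - x $ j * \<xi> $ i) / r) * g q
      + r powr c * ((x $ i * Dg (Xi j q) - x $ j * Dg (Xi i q)) / r)"
  proof -
    have "inner \<xi> (snd (Lf i j p)) = x $ i * \<xi> $ j - x $ j * \<xi> $ i"
      by (simp add: Lf_def px inner_diff_right inner_axis)
    moreover have "Dg (unit_fibre_deriv p (Lf i j p)) = (x $ i * Dg (Xi j q) - x $ j * Dg (Xi i q)) / r"
      using unit_fibre_deriv_Lf[of p i j] \<open>\<xi> \<noteq> 0\<close> \<open>linear Dg\<close>
      by (simp add: px q_def r_def linear_scale linear_diff divide_inverse_commute)
    ultimately show ?thesis by simp
  qed
  also have "\<dots> = r powr (c - 1) * Eop c i j g q"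
    unfolding Eop_def Xi using powr_add[of r 1 "c - 1"] r by (simp add: q(1) field_simps)
  also have "\<dots> = homog_ext (c - 1) (Eop c i j g) p"
    by (simp add: homog_ext_def q_def px r_def)
  finally show ?thesis .
qed

lemma foldr_vf_act_Lf_homog_ext:
  assumes g: "smooth_on_sub (TS - S0) g" and f: "\<And>q. q \<in> Vn \<Longrightarrow> f q = homog_ext c g q"
    and "p \<in> Vn"
  shows "foldr (\<lambda>k h. vf_act Vn (Lf (I k) (J k)) h) [a..<b] f p
      = homog_ext (c - real (b - a))
          (foldr (\<lambda>k h. Eop (c + real k + 1 - real b) (I k) (J k) h) [a..<b] g) p"
  using \<open>p \<in> Vn\<close>
proof (induction "b - a" arbitrary: a p)
  case 0
  then show ?case using f by simp
next
  case (Suc n)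
  then have "a < b" and upt: "[a..<b] = a # [Suc a..<b]" by (auto simp: upt_conv_Cons)
  let ?L = "foldr (\<lambda>k h. vf_act Vn (Lf (I k) (J k)) h) [Suc a..<b] f"
  let ?E = "foldr (\<lambda>k h. Eop (c + real k + 1 - real b) (I k) (J k) h) [Suc a..<b] g"
  have "vf_act Vn (Lf (I a) (J a)) ?L p
      = vf_act Vn (Lf (I a) (J a)) (homog_ext (c - real (b - Suc a)) ?E) p"
    by (rule vf_act_cong[OF Suc.prems]) (use Suc.hyps(1)[of "Suc a"] Suc.hyps(2) in simp)
  also have "\<dots> = homog_ext (c - real (b - Suc a) - 1) (Eop (c - real (b - Suc a)) (I a) (J a) ?E) p"
    by (rule vf_act_Lf_homog_ext[OF smooth_on_sub_foldr_Eop[OF g] Suc.prems])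
  finally show ?case
    using \<open>a < b\<close> by (simp add: upt of_nat_diff algebra_simps)
qed

lemma rev_upt: "rev [a..<b] = map (\<lambda>k. a + b - Suc k) [a..<b]"
  by (rule nth_equalityI) (auto simp: rev_nth)

theorem lemma4p2:
  fixes m :: nat and \<phi> :: "'n::finite pt \<Rightarrow> real"
  assumes smooth: "smooth_on_sub (TS - S0) \<phi>"
    and hyp: "\<And>I J :: nat \<Rightarrow> 'n. \<forall>p \<in> TS - S0.
         foldr (\<lambda>k g. Eop (real m - real k + 1) (I k) (J k) g) (rev [1..<m+2]) \<phi> p = 0"
  shows "\<And>I J :: nat \<Rightarrow> 'n. \<forall>p \<in> Vn.
         foldr (\<lambda>k g. vf_act Vn (Lf (I k) (J k)) g) [1..<m+2]
           (\<lambda>(x, \<xi>). norm \<xi> ^ m * \<phi> (x, (1 / norm \<xi>) *\<^sub>R \<xi>)) p = 0"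
proof
  fix I J :: "nat \<Rightarrow> 'n" and p :: "'n pt"
  assume p: "p \<in> Vn"
  let ?E = "foldr (\<lambda>k h. Eop (real m + real k + 1 - real (m + 2)) (I k) (J k) h) [1..<m+2] \<phi>"
  have reindex: "?E = foldr (\<lambda>k g. Eop (real m - real k + 1) (I (m + 2 - k)) (J (m + 2 - k)) g)
      (rev [1..<m+2]) \<phi>"
    unfolding rev_upt foldr_map by (rule foldr_cong) (auto simp: of_nat_diff)
  have E: "?E q = 0" if "q \<in> TS - S0" for q
    unfolding reindex using hyp[of "\<lambda>k. I (m + 2 - k)" "\<lambda>k. J (m + 2 - k)"] that by blast
  have "\<And>q. q \<in> Vn \<Longrightarrow> (\<lambda>(x, \<xi>). norm \<xi> ^ m * \<phi> (x, (1 / norm \<xi>) *\<^sub>R \<xi>)) q = homog_ext m \<phi> q"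
    by (auto simp: Vn_def homog_ext_def unit_fibre_def powr_realpow)
  from foldr_vf_act_Lf_homog_ext[OF smooth this p, of I J 1 "m + 2"]
  show "foldr (\<lambda>k g. vf_act Vn (Lf (I k) (J k)) g) [1..<m+2]
      (\<lambda>(x, \<xi>). norm \<xi> ^ m * \<phi> (x, (1 / norm \<xi>) *\<^sub>R \<xi>)) p = 0"
    using E[OF unit_fibre_Vn[OF p]] by (simp add: homog_ext_def)
qed

end
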